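(* Let $\zeta:\mathbb{R}\to\mathbb{R}$ be continuous and assume either (i) $\zeta$ is not a polynomial, or (ii) $\zeta$ is not affine and there exists $t\in\mathbb{R}$ at which $\zeta$ is continuously differentiable with $\zeta'(t)\neq 0$. Let $N, D$ be positive integers with $N\ge 2$, let $\mathcal{G}$ be the complete graph on $N$ nodes, let $\mathbf{W}\in\mathbb{R}^{D\times D}$, let $\tilde{\mathbf{A}} = \big(\mathbb{1}_{i\sim j \vee i=j}/\sqrt{\deg(v_i)\deg(v_j)}\big)_{i,j=1}^N$ and $\mathcal{L}^{\mathrm{conv}}_{\mathcal{G},\mathbf{W}}(\mathbf{X}) = \tilde{\mathbf{A}}\mathbf{X}\mathbf{W}$. Then the class of maps $f:\mathbb{R}^{N\times D}\to\mathbb{R}$ of the form $f = \mathrm{MLP}\circ\mathcal{L}^{\mathrm{conv}}_{\mathcal{G},\mathbf{W}}$, where $\mathrm{MLP}:\mathbb{R}^{N\times D}\to\mathbb{R}$ ranges over multilayer perceptrons with activation function $\zeta$, is not dense in $\mathcal{C}(\mathbb{R}^{N\times D},\mathbb{R})$ for the topology of uniform convergence on compact sets.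
   Context: $i\sim j$ means $v_i$ and $v_j$ are adjacent; degrees count the self-loop, so that for the complete graph every entry of $\tilde{\mathbf{A}}$ equals $1/N$. MLPs take the matrix input (viewed as a vector in $\mathbb{R}^{ND}$) to a real number. *)

theory Defs
  imports "HOL-Analysis.Analysis" "HOL-Computational_Algebra.Polynomial"
begin

text \<open>Hidden units of an MLP with activation zeta on inputs X in R^(N x D)
  (X $ i $ j = entry in row i, column j).\<close>
inductive mlp_unit :: "(real \<Rightarrow> real) \<Rightarrow> nat \<Rightarrow> (real^'d::finite^'n::finite \<Rightarrow> real) \<Rightarrow> bool"
  for \<zeta> :: "real \<Rightarrow> real" where
  coord: "mlp_unit \<zeta> 0 (\<lambda>X. X $ i $ j)"
| layer: "(\<forall>k<(m::nat). mlp_unit \<zeta> l (h k :: real^'d^'n \<Rightarrow> real)) \<Longrightarrow>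
          mlp_unit \<zeta> (Suc l) (\<lambda>X. \<zeta> (b + (\<Sum>k<m. w k * h k X :: real)))"

definition mlp :: "(real \<Rightarrow> real) \<Rightarrow> (real^'d::finite^'n::finite \<Rightarrow> real) \<Rightarrow> bool" where
  "mlp \<zeta> f \<longleftrightarrow> (\<exists>l (m::nat) h w b. (\<forall>k<m. mlp_unit \<zeta> l (h k)) \<and>
                      f = (\<lambda>X. b + (\<Sum>k<m. w k * h k X :: real)))"

definition gdeg :: "('n::finite \<Rightarrow> 'n \<Rightarrow> bool) \<Rightarrow> 'n \<Rightarrow> real" where
  "gdeg E i = real (card {j. E i j \<or> i = j})"

definition norm_adj :: "('n::finite \<Rightarrow> 'n \<Rightarrow> bool) \<Rightarrow> real^'n^'n" where
  "norm_adj E = (\<chi> i j. (if E i j \<or> i = j then 1 else 0) / sqrt (gdeg E i * gdeg E j))"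

definition complete_graph :: "'n \<Rightarrow> 'n \<Rightarrow> bool" where
  "complete_graph i j \<longleftrightarrow> i \<noteq> j"

definition conv_layer :: "('n::finite \<Rightarrow> 'n \<Rightarrow> bool) \<Rightarrow> real^'d^'d \<Rightarrow> real^'d^'n \<Rightarrow> real^'d^'n" where
  "conv_layer E W X = norm_adj E ** X ** W"

definition is_polynomial_fun :: "(real \<Rightarrow> real) \<Rightarrow> bool" where
  "is_polynomial_fun g \<longleftrightarrow> (\<exists>p :: real poly. \<forall>x. g x = poly p x)"

definition is_affine_fun :: "(real \<Rightarrow> real) \<Rightarrow> bool" where
  "is_affine_fun g \<longleftrightarrow> (\<exists>a b. \<forall>x. g x = a * x + b)"

definition C1_at :: "(real \<Rightarrow> real) \<Rightarrow> real \<Rightarrow> bool" where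
  "C1_at g t \<longleftrightarrow> (\<exists>e>0. \<forall>x\<in>ball t e. g differentiable at x) \<and> isCont (deriv g) t"

end

theory Submission
  imports Defs
begin

text \<open>On the complete graph every entry of the normalized adjacency matrix is \<open>1/N\<close>, so the
  convolution replaces each row of \<open>X\<close> by the mean of the rows and only sees the column
  sums of \<open>X\<close>. The inputs with a row of ones at node \<open>a\<close>, resp. at a node \<open>b \<noteq> a\<close>, and zeros
  elsewhere are therefore identified, while the continuous function \<open>X \<mapsto> X $ a $ j\<close> takes
  the values 1 and 0 on them. No map of the form \<open>f \<circ> conv\<close>, whatever \<open>f\<close> is, comes within
  1/2 of it on this two-point compact set.\<close>

lemma gdeg_complete_graph: "gdeg complete_graph (i :: 'n::finite) = real CARD('n)"
proof -
  have "{j. complete_graph i j \<or> i = j} = (UNIV :: 'n set)"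
    by (auto simp: complete_graph_def)
  then show ?thesis
    by (simp add: gdeg_def)
qed

lemma norm_adj_complete_graph:
  "norm_adj (complete_graph :: 'n::finite \<Rightarrow> 'n \<Rightarrow> bool) = (\<chi> i j. 1 / real CARD('n))"
  by (simp add: norm_adj_def gdeg_complete_graph complete_graph_def vec_eq_iff)

lemma norm_adj_complete_graph_mult:
  fixes X :: "real^'d^'n::finite"
  shows "(norm_adj complete_graph ** X) $ i $ j = (\<Sum>k\<in>UNIV. X $ k $ j) / real CARD('n)"
  by (simp add: norm_adj_complete_graph matrix_matrix_mult_def sum_divide_distrib)

lemma conv_layer_complete_graph_eqI:
  fixes X Y :: "real^'d^'n::finite"
  assumes "\<And>j. (\<Sum>k\<in>UNIV. X $ k $ j) = (\<Sum>k\<in>UNIV. Y $ k $ j)"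
  shows "conv_layer complete_graph W X = conv_layer complete_graph W Y"
proof -
  have "norm_adj complete_graph ** X = norm_adj complete_graph ** Y"
    by (simp add: vec_eq_iff norm_adj_complete_graph_mult assms)
  then show ?thesis
    by (simp add: conv_layer_def)
qed

lemma approx_through_identifying_map:
  fixes f g :: "'a \<Rightarrow> real"
  assumes "\<phi> x = \<phi> y" and "\<bar>f (\<phi> x) - g x\<bar> < \<epsilon>" and "\<bar>f (\<phi> y) - g y\<bar> < \<epsilon>"
  shows "\<bar>g x - g y\<bar> < 2 * \<epsilon>"
  using assms(2,3) unfolding assms(1) abs_less_iff by linarith

lemma two_distinct_elements:
  assumes "CARD('a::finite) \<ge> 2"
  obtains a b :: "'a::finite" where "a \<noteq> b"
proof -
  have "\<not> (\<forall>a b :: 'a. a = b)"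
  proof
    assume "\<forall>a b :: 'a. a = b"
    then have "(UNIV :: 'a set) \<subseteq> {undefined}"
      by auto
    then have "CARD('a) \<le> 1"
      using card_mono[of "{undefined}" UNIV] by simp
    with assms show False
      by simp
  qed
  then show ?thesis
    using that by blast
qed

theorem lemma2:
  fixes \<zeta> :: "real \<Rightarrow> real" and W :: "real^'d::finite^'d"
  assumes "continuous_on UNIV \<zeta>"
    and "\<not> is_polynomial_fun \<zeta> \<or>
         (\<not> is_affine_fun \<zeta> \<and> (\<exists>t. C1_at \<zeta> t \<and> deriv \<zeta> t \<noteq> 0))"
    and "CARD('n::finite) \<ge> 2"
  shows "\<not> (\<forall>g :: real^'d^'n \<Rightarrow> real. continuous_on UNIV g \<longrightarrow>
             (\<forall>K. compact K \<longrightarrow> (\<forall>\<epsilon>>0. \<exists>f. mlp \<zeta> f \<and>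
                (\<forall>X\<in>K. \<bar>f (conv_layer complete_graph W X) - g X\<bar> < \<epsilon>))))"
proof
  assume dense: "\<forall>g :: real^'d^'n \<Rightarrow> real. continuous_on UNIV g \<longrightarrow>
             (\<forall>K. compact K \<longrightarrow> (\<forall>\<epsilon>>0. \<exists>f. mlp \<zeta> f \<and>
                (\<forall>X\<in>K. \<bar>f (conv_layer complete_graph W X) - g X\<bar> < \<epsilon>)))"
  obtain a b :: 'n where "a \<noteq> b"
    using assms(3) two_distinct_elements by blast
  define row_of_ones :: "'n \<Rightarrow> real^'d^'n"
    where "row_of_ones c = (\<chi> k j. if k = c then 1 else 0)" for c
  fix j :: 'd
  have "continuous_on UNIV (\<lambda>X :: real^'d^'n. X $ a $ j)"
    by (intro continuous_intros)
  moreover have "compact {row_of_ones a, row_of_ones b}"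
    by simp
  ultimately obtain f where "\<forall>X\<in>{row_of_ones a, row_of_ones b}.
      \<bar>f (conv_layer complete_graph W X) - X $ a $ j\<bar> < 1/2"
    using dense[rule_format, of "\<lambda>X. X $ a $ j" "{row_of_ones a, row_of_ones b}" "1/2"] by auto
  then have fa: "\<bar>f (conv_layer complete_graph W (row_of_ones a)) - row_of_ones a $ a $ j\<bar> < 1/2"
    and fb: "\<bar>f (conv_layer complete_graph W (row_of_ones b)) - row_of_ones b $ a $ j\<bar> < 1/2"
    by blast+
  have "conv_layer complete_graph W (row_of_ones a) = conv_layer complete_graph W (row_of_ones b)"
    by (rule conv_layer_complete_graph_eqI) (simp add: row_of_ones_def)
  from approx_through_identifying_map[OF this fa fb]
  have "\<bar>row_of_ones a $ a $ j - row_of_ones b $ a $ j\<bar> < 1"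
    by simp
  with \<open>a \<noteq> b\<close> show False
    by (simp add: row_of_ones_def)
qed

end
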